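(* Let $X$ be a real Banach space with a normalized Schauder basis $\mathcal B=(e_n)_{n=1}^\infty$ with biorthogonal functionals $(e_n^* )$, and let $\mathcal E=(\varepsilon_n)_{n=1}^\infty$ be a sequence of nonnegative numbers. The following are equivalent: (1) the brick $K_{\mathcal B,\mathcal E}$ is compact; (2) $K_{\mathcal B,\mathcal E}$ is holistic, i.e. for every scalar sequence $(a_n)$ with $|a_n|\le\varepsilon_n$ for all $n$ the series $\sum_{n=1}^\infty a_ne_n$ converges; (3) the series $\sum_{n=1}^\infty\varepsilon_ne_n$ converges unconditionally; (4) $r^{\rm unc}(K_{\mathcal B,\mathcal E})<\infty$.
   Context: The brick is $K_{\mathcal B,\mathcal E}=\{x\in X:\ |e_n^*(x)|\le\varepsilon_n \text{ for all } n\}$. The unconditional radius is $r^{\rm unc}(K_{\mathcal B,\mathcal E})=\sup_{\theta_n=\pm1}\|\sum_{n=1}^\infty\theta_n\varepsilon_ne_n\|$, where the norm of a divergent series is $\infty$. A series converges unconditionally if every rearrangement of it converges. *)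

theory Defs
  imports "HOL-Analysis.Analysis"
begin

text \<open>Schauder basis (indexed from 0): every vector has a unique expansion
  x = sum of c n *R e n, with convergence of the partial sums.\<close>
definition schauder_basis :: "(nat \<Rightarrow> 'a::real_normed_vector) \<Rightarrow> bool" where
  "schauder_basis e \<longleftrightarrow> (\<forall>x. \<exists>!c::nat \<Rightarrow> real. (\<lambda>n. c n *\<^sub>R e n) sums x)"

definition coef :: "(nat \<Rightarrow> 'a::real_normed_vector) \<Rightarrow> nat \<Rightarrow> 'a \<Rightarrow> real" where
  "coef e n x = (THE c::nat \<Rightarrow> real. (\<lambda>k. c k *\<^sub>R e k) sums x) n"

definition brick :: "(nat \<Rightarrow> 'a::real_normed_vector) \<Rightarrow> (nat \<Rightarrow> real) \<Rightarrow> 'a set" where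
  "brick e eps = {x. \<forall>n. \<bar>coef e n x\<bar> \<le> eps n}"

definition holistic_brick :: "(nat \<Rightarrow> 'a::real_normed_vector) \<Rightarrow> (nat \<Rightarrow> real) \<Rightarrow> bool" where
  "holistic_brick e eps \<longleftrightarrow>
     (\<forall>a::nat \<Rightarrow> real. (\<forall>n. \<bar>a n\<bar> \<le> eps n) \<longrightarrow> summable (\<lambda>n. a n *\<^sub>R e n))"

definition unconditionally_convergent :: "(nat \<Rightarrow> 'a::real_normed_vector) \<Rightarrow> bool" where
  "unconditionally_convergent f \<longleftrightarrow> (\<forall>p. bij p \<longrightarrow> summable (\<lambda>n. f (p n)))"

text \<open>Unconditional radius of the brick; a divergent series has norm \<infinity>.\<close>
definition r_unc :: "(nat \<Rightarrow> 'a::real_normed_vector) \<Rightarrow> (nat \<Rightarrow> real) \<Rightarrow> ereal" where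
  "r_unc e eps = (SUP \<theta> \<in> {\<theta>::nat \<Rightarrow> real. \<forall>n. \<theta> n = 1 \<or> \<theta> n = -1}.
      (if summable (\<lambda>n. (\<theta> n * eps n) *\<^sub>R e n)
       then ereal (norm (\<Sum>n. (\<theta> n * eps n) *\<^sub>R e n)) else \<infinity>))"

end

theory Submission
  imports Defs
begin

text \<open>Each of the four conditions is equivalent to the Cauchy criterion for the finite
  subsums of \<open>\<Sum> x\<^sub>n\<close>, \<open>x\<^sub>n = \<epsilon>\<^sub>n e\<^sub>n\<close>. Under that criterion the series \<open>\<Sum> t\<^sub>n x\<^sub>n\<close> with \<open>|t\<^sub>n| \<le> 1\<close>
  converge uniformly in \<open>t\<close>, since each finite sum \<open>\<Sum>\<^bsub>n\<in>F\<^esub> t\<^sub>n x\<^sub>n\<close> is a convex combination of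
  the signed sums \<open>\<Sum>\<^bsub>G\<^esub> x\<^sub>n - \<Sum>\<^bsub>F-G\<^esub> x\<^sub>n\<close>. Hence the brick, the image of the compact cube
  \<open>[-1,1]\<^sup>\<nat>\<close> under a continuous map, is compact, all series with coefficients bounded by \<open>\<epsilon>\<close>
  and all rearrangements converge, and the sign sums are bounded.

  If the criterion fails, there are finite sets \<open>B\<^sub>k\<close> in consecutive disjoint intervals with
  \<open>\<parallel>\<Sum>\<^bsub>B\<^sub>k\<^esub> x\<^sub>n\<parallel> \<ge> d\<close>. The subseries over \<open>\<Union> B\<^sub>k\<close> diverges, which contradicts holisticity and,
  being the average of two sign series, finiteness of \<open>r\<^sup>u\<^sup>n\<^sup>c\<close>; moving each \<open>B\<^sub>k\<close> to the front
  of its interval gives a divergent rearrangement; and in a compact brick the block sums would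
  have a subsequence converging to a vector that must be \<open>0\<close>, because all finite sums of
  block sums stay in the brick; this contradicts \<open>\<parallel>\<Sum>\<^bsub>B\<^sub>k\<^esub> x\<^sub>n\<parallel> \<ge> d\<close>.\<close>

definition unconditionally_Cauchy :: "(nat \<Rightarrow> 'a::real_normed_vector) \<Rightarrow> bool" where
  "unconditionally_Cauchy x \<longleftrightarrow>
     (\<forall>d>0. \<exists>N. \<forall>F. finite F \<longrightarrow> F \<subseteq> {N..} \<longrightarrow> norm (sum x F) < d)"

definition unit_cube :: "(nat \<Rightarrow> real) set" where
  "unit_cube = {t. \<forall>n. \<bar>t n\<bar> \<le> 1}"

lemma norm_add_sum_scaleR_le_sign_sums:
  fixes x :: "nat \<Rightarrow> 'a::real_normed_vector"
  assumes "finite F" and "t \<in> unit_cube"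
    and "\<forall>G\<subseteq>F. norm (v + sum x G - sum x (F - G)) \<le> M"
  shows "norm (v + (\<Sum>n\<in>F. t n *\<^sub>R x n)) \<le> M"
  using assms(1,3)
proof (induction F arbitrary: v rule: finite_induct)
  case empty
  then show ?case by (metis Diff_empty empty_subsetI sum.empty diff_zero add_0_right)
next
  case (insert i F)
  define S where "S = (\<Sum>n\<in>F. t n *\<^sub>R x n)"
  have plus: "norm (v + x i + S) \<le> M"
    unfolding S_def
  proof (rule insert.IH, intro allI impI)
    fix G assume G: "G \<subseteq> F"
    have "norm (v + sum x (insert i G) - sum x (insert i F - insert i G)) \<le> M"
      using insert.prems G by blast
    moreover have "sum x (insert i G) = x i + sum x G"
      using G insert.hyps by (meson finite_subset subsetD sum.insert)
    moreover have "insert i F - insert i G = F - G" using insert.hyps G by auto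
    ultimately show "norm (v + x i + sum x G - sum x (F - G)) \<le> M"
      by (simp add: algebra_simps)
  qed
  have minus: "norm (v - x i + S) \<le> M"
    unfolding S_def
  proof (rule insert.IH, intro allI impI)
    fix G assume G: "G \<subseteq> F"
    have "norm (v + sum x G - sum x (insert i F - G)) \<le> M"
      using insert.prems G by blast
    moreover have "insert i F - G = insert i (F - G)" using insert.hyps G by auto
    ultimately show "norm (v - x i + sum x G - sum x (F - G)) \<le> M"
      using insert.hyps by (simp add: algebra_simps)
  qed
  \<comment> \<open>\<open>t i = l \<cdot> 1 + (1 - l) \<cdot> (-1)\<close>, so the sum is a convex combination of the two cases above.\<close>
  define l where "l = (1 + t i) / 2"
  have "\<bar>t i\<bar> \<le> 1" using assms(2) by (simp add: unit_cube_def)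
  then have l: "0 \<le> l" "l \<le> 1" by (auto simp: l_def abs_le_iff)
  have "v + (\<Sum>n\<in>insert i F. t n *\<^sub>R x n) = l *\<^sub>R (v + x i + S) + (1 - l) *\<^sub>R (v - x i + S)"
    using insert.hyps unfolding S_def l_def
    by (simp add: algebra_simps flip: scaleR_add_left) (simp add: scaleR_add_left)
  also have "norm \<dots> \<le> l * norm (v + x i + S) + (1 - l) * norm (v - x i + S)"
    using l norm_triangle_ineq[of "l *\<^sub>R (v + x i + S)" "(1 - l) *\<^sub>R (v - x i + S)"] by simp
  also have "\<dots> \<le> l * M + (1 - l) * M"
    using plus minus l by (intro add_mono mult_left_mono) auto
  finally show ?case by (simp add: algebra_simps)
qed

lemma norm_sum_scaleR_le_twice_subsums:
  fixes x :: "nat \<Rightarrow> 'a::real_normed_vector"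
  assumes "finite F" and "t \<in> unit_cube" and "\<And>G. G \<subseteq> F \<Longrightarrow> norm (sum x G) \<le> c"
  shows "norm (\<Sum>n\<in>F. t n *\<^sub>R x n) \<le> 2 * c"
proof -
  have "norm (0 + (\<Sum>n\<in>F. t n *\<^sub>R x n)) \<le> 2 * c"
  proof (rule norm_add_sum_scaleR_le_sign_sums[OF assms(1,2)], intro allI impI)
    fix G assume "G \<subseteq> F"
    then have "norm (sum x G) \<le> c" "norm (sum x (F - G)) \<le> c" using assms(3) by auto
    then show "norm (0 + sum x G - sum x (F - G)) \<le> 2 * c"
      using norm_triangle_ineq4[of "sum x G" "sum x (F - G)"] by simp
  qed
  then show ?thesis by simp
qed

lemma unconditionally_Cauchy_multiplier_tail:
  fixes x :: "nat \<Rightarrow> 'a::real_normed_vector"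
  assumes "unconditionally_Cauchy x" and "d > 0"
  obtains N where "\<And>F t. finite F \<Longrightarrow> F \<subseteq> {N..} \<Longrightarrow> t \<in> unit_cube \<Longrightarrow>
      norm (\<Sum>n\<in>F. t n *\<^sub>R x n) \<le> d"
proof -
  obtain N where N: "\<And>F. finite F \<Longrightarrow> F \<subseteq> {N..} \<Longrightarrow> norm (sum x F) < d / 2"
    using assms unfolding unconditionally_Cauchy_def by (meson half_gt_zero)
  show ?thesis
  proof (rule that)
    fix F t assume F: "finite F" "F \<subseteq> {N..}" and "t \<in> unit_cube"
    have "norm (sum x G) \<le> d / 2" if "G \<subseteq> F" for G
      using N[of G] F that by (meson finite_subset less_imp_le order_trans)
    then have "norm (\<Sum>n\<in>F. t n *\<^sub>R x n) \<le> 2 * (d / 2)"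
      using norm_sum_scaleR_le_twice_subsums F(1) \<open>t \<in> unit_cube\<close> by blast
    then show "norm (\<Sum>n\<in>F. t n *\<^sub>R x n) \<le> d" by simp
  qed
qed

lemma unconditionally_Cauchy_summable_multiplier:
  fixes x :: "nat \<Rightarrow> 'a::banach"
  assumes "unconditionally_Cauchy x" and "t \<in> unit_cube"
  shows "summable (\<lambda>n. t n *\<^sub>R x n)"
  unfolding summable_Cauchy
proof (intro allI impI)
  fix d :: real assume "d > 0"
  then obtain N where N: "\<And>F. finite F \<Longrightarrow> F \<subseteq> {N..} \<Longrightarrow> norm (\<Sum>n\<in>F. t n *\<^sub>R x n) \<le> d / 2"
    using unconditionally_Cauchy_multiplier_tail[OF assms(1), of "d / 2"] assms(2) by (metis half_gt_zero)
  have "norm (\<Sum>i = m..<n. t i *\<^sub>R x i) < d" if "N \<le> m" for m n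
    using N[of "{m..<n}"] that \<open>d > 0\<close> by fastforce
  then show "\<exists>N. \<forall>m\<ge>N. \<forall>n. norm (\<Sum>i = m..<n. t i *\<^sub>R x i) < d" by blast
qed

lemma norm_suminf_minus_sum_le:
  fixes f :: "nat \<Rightarrow> 'a::real_normed_vector"
  assumes "summable f" and "\<And>M. N \<le> M \<Longrightarrow> norm (sum f {N..<M}) \<le> d"
  shows "norm (suminf f - sum f {..<N}) \<le> d"
proof (rule LIMSEQ_le_const2)
  show "(\<lambda>M. norm (sum f {..<M} - sum f {..<N})) \<longlonglongrightarrow> norm (suminf f - sum f {..<N})"
    using summable_LIMSEQ[OF assms(1)] by (intro tendsto_norm tendsto_diff) auto
  have "sum f {..<M} - sum f {..<N} = sum f {N..<M}" if "N \<le> M" for M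
    using that by (metis add_diff_cancel_left' atLeast0LessThan sum.atLeastLessThan_concat zero_le)
  then show "\<exists>N'. \<forall>M\<ge>N'. norm (sum f {..<M} - sum f {..<N}) \<le> d"
    using assms(2) by (intro exI[of _ N]) simp
qed

lemma unconditionally_Cauchy_uniform_limit:
  fixes x :: "nat \<Rightarrow> 'a::banach"
  assumes "unconditionally_Cauchy x"
  shows "uniform_limit unit_cube (\<lambda>N t. \<Sum>n<N. t n *\<^sub>R x n) (\<lambda>t. \<Sum>n. t n *\<^sub>R x n) sequentially"
  unfolding uniform_limit_iff
proof (intro allI impI)
  fix d :: real assume "d > 0"
  then obtain N where N: "\<And>F t. finite F \<Longrightarrow> F \<subseteq> {N..} \<Longrightarrow> t \<in> unit_cube \<Longrightarrow>
      norm (\<Sum>n\<in>F. t n *\<^sub>R x n) \<le> d / 2"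
    using unconditionally_Cauchy_multiplier_tail[OF assms, of "d / 2"] by auto
  have "dist (\<Sum>n<M. t n *\<^sub>R x n) (\<Sum>n. t n *\<^sub>R x n) \<le> d / 2"
    if "N \<le> M" "t \<in> unit_cube" for M t
    unfolding dist_norm norm_minus_commute[of "sum _ _"]
    using that unconditionally_Cauchy_summable_multiplier[OF assms]
    by (intro norm_suminf_minus_sum_le N) auto
  with \<open>d > 0\<close> show "\<forall>\<^sub>F M in sequentially. \<forall>t\<in>unit_cube.
      dist (\<Sum>n<M. t n *\<^sub>R x n) (\<Sum>n. t n *\<^sub>R x n) < d"
    unfolding eventually_sequentially by force
qed

lemma compact_unit_cube: "compact unit_cube"
proof -
  have "unit_cube = PiE UNIV (\<lambda>_. {-1..1})"
    by (auto simp: unit_cube_def PiE_iff abs_le_iff)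
  moreover have "compactin (product_topology (\<lambda>_. euclidean) UNIV) (PiE UNIV (\<lambda>_. {-1..1::real}))"
    by (subst compactin_PiE) auto
  ultimately show ?thesis by (metis euclidean_product_topology compactin_euclidean_iff)
qed

lemma unconditionally_Cauchy_compact_multiplier_image:
  fixes x :: "nat \<Rightarrow> 'a::banach"
  assumes "unconditionally_Cauchy x"
  shows "compact ((\<lambda>t. \<Sum>n. t n *\<^sub>R x n) ` unit_cube)"
proof (rule compact_continuous_image[OF _ compact_unit_cube])
  show "continuous_on unit_cube (\<lambda>t. \<Sum>n. t n *\<^sub>R x n)"
    by (rule uniform_limit_theorem[OF _ unconditionally_Cauchy_uniform_limit[OF assms]])
      (auto intro!: always_eventually continuous_intros
        continuous_on_subset[OF continuous_on_product_coordinates])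
qed

lemma unconditionally_Cauchy_reindex:
  assumes "unconditionally_Cauchy x" and "bij p"
  shows "unconditionally_Cauchy (x \<circ> p)"
  unfolding unconditionally_Cauchy_def
proof (intro allI impI)
  fix d :: real assume "d > 0"
  then obtain N where N: "\<And>F. finite F \<Longrightarrow> F \<subseteq> {N..} \<Longrightarrow> norm (sum x F) < d"
    using assms(1) unfolding unconditionally_Cauchy_def by blast
  have "finite (p -` {..<N})"
    using assms(2) by (intro finite_vimageI) (auto simp: bij_def)
  then obtain M where M: "\<And>n. p n < N \<Longrightarrow> n < M"
    unfolding finite_nat_set_iff_bounded by blast
  have "norm (sum (x \<circ> p) F) < d" if "finite F" "F \<subseteq> {M..}" for F
  proof -
    have "sum (x \<circ> p) F = sum x (p ` F)"
      using sum.reindex[OF inj_on_subset[OF bij_is_inj[OF assms(2)] subset_UNIV], of x F] by simp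
    moreover have "p ` F \<subseteq> {N..}" using M that(2) by (force simp: not_less[symmetric])
    ultimately show ?thesis using N that(1) by simp
  qed
  then show "\<exists>M. \<forall>F. finite F \<longrightarrow> F \<subseteq> {M..} \<longrightarrow> norm (sum (x \<circ> p) F) < d" by blast
qed

lemma unconditionally_Cauchy_imp_unconditionally_convergent:
  fixes x :: "nat \<Rightarrow> 'a::banach"
  assumes "unconditionally_Cauchy x"
  shows "unconditionally_convergent x"
  unfolding unconditionally_convergent_def
proof (intro allI impI)
  fix p :: "nat \<Rightarrow> nat" assume "bij p"
  have "summable (\<lambda>n. 1 *\<^sub>R (x \<circ> p) n)"
    using unconditionally_Cauchy_reindex[OF assms \<open>bij p\<close>]
    by (rule unconditionally_Cauchy_summable_multiplier) (simp add: unit_cube_def)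
  then show "summable (\<lambda>n. x (p n))" by simp
qed

lemma not_unconditionally_Cauchy_blocks:
  assumes "\<not> unconditionally_Cauchy x"
  obtains d m B where "d > 0" "strict_mono m" "m 0 = 0"
    "\<And>k. B k \<subseteq> {m k..<m (Suc k)}" "\<And>k. norm (sum x (B k)) \<ge> d"
proof -
  from assms obtain d where d: "d > 0" "\<forall>N. \<exists>F. finite F \<and> F \<subseteq> {N..} \<and> norm (sum x F) \<ge> d"
    unfolding unconditionally_Cauchy_def by (auto simp: not_less)
  then obtain Fs where Fs: "\<And>N. finite (Fs N) \<and> Fs N \<subseteq> {N..} \<and> norm (sum x (Fs N)) \<ge> d"
    by metis
  define m where "m = rec_nat 0 (\<lambda>_ mk. Suc (Max (insert mk (Fs mk))))"
  have m0: "m 0 = 0" and mSuc: "m (Suc k) = Suc (Max (insert (m k) (Fs (m k))))" for k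
    by (simp_all add: m_def)
  have "m k < m (Suc k)" for k
    unfolding mSuc using Fs[of "m k"] by (simp add: le_imp_less_Suc)
  then have mono: "strict_mono m" by (simp add: strict_mono_Suc_iff)
  have blocks: "Fs (m k) \<subseteq> {m k..<m (Suc k)}" for k
    unfolding mSuc using Fs[of "m k"] by (auto simp: less_Suc_eq_le)
  show ?thesis by (rule that[OF d(1) mono m0 blocks]) (use Fs in blast)
qed

lemma strict_mono_blocks_disjoint:
  assumes "strict_mono (m :: nat \<Rightarrow> nat)" and "j \<noteq> k"
  shows "{m j..<m (Suc j)} \<inter> {m k..<m (Suc k)} = {}"
proof -
  have "m (Suc j) \<le> m k \<or> m (Suc k) \<le> m j"
    using assms by (metis not_less_eq_eq strict_mono_less_eq nat_neq_iff Suc_leI)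
  then show ?thesis by auto
qed

lemma strict_mono_blocks_cover:
  assumes "strict_mono (m :: nat \<Rightarrow> nat)" and "m 0 = 0"
  shows "\<exists>k. n \<in> {m k..<m (Suc k)}"
proof -
  define k where "k = (LEAST k. n < m (Suc k))"
  have "n < m (Suc n)"
    using seq_suble[OF assms(1), of "Suc n"] by simp
  then have "n < m (Suc k)" unfolding k_def by (rule LeastI)
  moreover have "m k \<le> n"
  proof (cases k)
    case (Suc j)
    then have "\<not> n < m (Suc j)" unfolding k_def by (metis lessI not_less_Least)
    then show ?thesis using Suc by simp
  qed (use assms(2) in simp)
  ultimately show ?thesis by auto
qed

lemma bij_glue_bij_betw:
  assumes partition: "\<And>n. \<exists>!k. n \<in> I k"
    and bij_on_parts: "\<And>k. bij_betw (f k) (I k) (I k)"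
  shows "bij (\<lambda>n. f (THE k. n \<in> I k) n)" (is "bij ?g")
proof -
  have g: "?g n = f k n" if "n \<in> I k" for n k
    using partition that by (metis the_equality)
  have into: "f k n \<in> I k" if "n \<in> I k" for n k
    using bij_on_parts that by (meson bij_betwE)
  show ?thesis
  proof (rule bijI)
    show "inj ?g"
    proof (rule injI)
      fix n1 n2 assume eq: "?g n1 = ?g n2"
      obtain k1 k2 where n1: "n1 \<in> I k1" and n2: "n2 \<in> I k2" using partition by metis
      have "k1 = k2" using eq g[OF n1] g[OF n2] into[OF n1] into[OF n2] partition by metis
      then show "n1 = n2"
        using eq g[OF n1] g[OF n2] n1 n2 bij_on_parts by (metis bij_betw_iff_bijections)
    qed
    have "\<exists>n. y = ?g n" for y
    proof -
      obtain k where y: "y \<in> I k" using partition by metis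
      then obtain n where "n \<in> I k" "f k n = y" using bij_on_parts by (metis bij_betw_iff_bijections)
      then show ?thesis using g by metis
    qed
    then show "surj ?g" by (simp add: surj_def)
  qed
qed

lemma bij_betw_minus_interval:
  fixes a b :: nat
  shows "bij_betw (\<lambda>n. n - a) {a..<b} {..<b - a}"
  by (rule bij_betw_byWitness[where f' = "\<lambda>i. i + a"]) auto

lemma interval_permutation_onto_subset:
  fixes a b :: nat
  assumes "B \<subseteq> {a..<b}"
  obtains g where "bij_betw g {a..<b} {a..<b}" "g ` {a..<a + card B} = B"
proof -
  have finB: "finite B" using assms finite_subset by blast
  define L where "L = sorted_list_of_set B @ sorted_list_of_set ({a..<b} - B)"
  have distinct: "distinct L" and set: "set L = {a..<b}"
    using assms finB by (auto simp: L_def)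
  then have len: "length L = b - a" by (metis card_atLeastLessThan distinct_card)
  have "bij_betw ((!) L \<circ> (\<lambda>n. n - a)) {a..<b} {a..<b}"
    by (rule bij_betw_trans[OF bij_betw_minus_interval bij_betw_nth]) (use distinct set len in auto)
  moreover have "((!) L \<circ> (\<lambda>n. n - a)) ` {a..<a + card B} = B"
  proof -
    have "(\<lambda>n. n - a) ` {a..<a + card B} = {..<card B}"
      using bij_betw_imp_surj_on[OF bij_betw_minus_interval[of a "a + card B"]] by simp
    moreover have "(!) L ` {..<card B} = (!) (sorted_list_of_set B) ` {..<card B}"
      using finB by (intro image_cong) (auto simp: L_def nth_append)
    moreover have "\<dots> = B"
      using bij_betw_imp_surj_on[OF bij_betw_nth[of "sorted_list_of_set B"]] finB by simp
    ultimately show ?thesis by (metis image_comp)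
  qed
  ultimately show ?thesis using that by blast
qed

lemma unconditionally_convergent_imp_unconditionally_Cauchy:
  fixes x :: "nat \<Rightarrow> 'a::banach"
  assumes "unconditionally_convergent x"
  shows "unconditionally_Cauchy x"
proof (rule ccontr)
  assume "\<not> unconditionally_Cauchy x"
  then obtain d m B where d: "d > 0" and m: "strict_mono m" "m 0 = 0"
    and B: "\<And>k. B k \<subseteq> {m k..<m (Suc k)}" and big: "\<And>k. norm (sum x (B k)) \<ge> d"
    using not_unconditionally_Cauchy_blocks by blast
  define I where "I k = {m k..<m (Suc k)}" for k
  define J where "J k = {m k..<m k + card (B k)}" for k
  have "\<exists>g. bij_betw g (I k) (I k) \<and> g ` J k = B k" for k
    using interval_permutation_onto_subset[OF B[of k]] unfolding I_def J_def by metis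
  then obtain g where g: "\<And>k. bij_betw (g k) (I k) (I k)" and gJ: "\<And>k. g k ` J k = B k"
    by metis
  have partition: "\<exists>!k. n \<in> I k" for n
    using strict_mono_blocks_cover[OF m] strict_mono_blocks_disjoint[OF m(1)]
    unfolding I_def by blast
  define p where "p n = g (THE k. n \<in> I k) n" for n
  have "bij p" unfolding p_def by (rule bij_glue_bij_betw[OF partition g])
  then have "summable (\<lambda>n. x (p n))"
    using assms unfolding unconditionally_convergent_def by blast
  then obtain N where "\<forall>k\<ge>N. \<forall>n. norm (\<Sum>i = k..<n. x (p i)) < d"
    using d unfolding summable_Cauchy by blast
  then have N: "norm (\<Sum>i = m N..<n. x (p i)) < d" for n
    using seq_suble[OF m(1), of N] by blast
  have JI: "J N \<subseteq> I N"
    using card_mono[OF _ B[of N]] unfolding I_def J_def by auto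
  then have "p i = g N i" if "i \<in> J N" for i
    using partition that unfolding p_def by (metis subsetD the_equality)
  then have "(\<Sum>i = m N..<m N + card (B N). x (p i)) = (\<Sum>i\<in>J N. x (g N i))"
    unfolding J_def by (intro sum.cong) auto
  also have "\<dots> = sum x (B N)"
    using sum.reindex[OF inj_on_subset[OF bij_betw_imp_inj_on[OF g] JI], of x] gJ by simp
  finally show False using N[of "m N + card (B N)"] big[of N] by simp
qed



lemma unconditionally_convergent_iff_unconditionally_Cauchy:
  fixes x :: "nat \<Rightarrow> 'a::banach"
  shows "unconditionally_convergent x \<longleftrightarrow> unconditionally_Cauchy x"
  using unconditionally_convergent_imp_unconditionally_Cauchy
    unconditionally_Cauchy_imp_unconditionally_convergent by blast

lemma not_unconditionally_Cauchy_imp_divergent_subseries: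
  fixes x :: "nat \<Rightarrow> 'a::banach"
  assumes "\<not> unconditionally_Cauchy x"
  obtains A where "\<not> summable (\<lambda>n. if n \<in> A then x n else 0)"
proof -
  obtain d m B where d: "d > 0" and m: "strict_mono m"
    and B: "\<And>k. B k \<subseteq> {m k..<m (Suc k)}" and big: "\<And>k. norm (sum x (B k)) \<ge> d"
    using not_unconditionally_Cauchy_blocks[OF assms] by metis
  define A where "A = (\<Union>k. B k)"
  have "\<not> summable (\<lambda>n. if n \<in> A then x n else 0)"
  proof
    assume "summable (\<lambda>n. if n \<in> A then x n else 0)"
    then obtain N where "\<forall>k\<ge>N. \<forall>n. norm (\<Sum>i = k..<n. if i \<in> A then x i else 0) < d"
      using d unfolding summable_Cauchy by blast
    then have N: "norm (\<Sum>i = m N..<n. if i \<in> A then x i else 0) < d" for n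
      using seq_suble[OF m, of N] by blast
    have "{m N..<m (Suc N)} \<inter> A = B N"
    proof (intro equalityI subsetI)
      fix n assume "n \<in> {m N..<m (Suc N)} \<inter> A"
      then obtain k where "n \<in> B k" "n \<in> {m N..<m (Suc N)}" unfolding A_def by blast
      then have "k = N" using B[of k] strict_mono_blocks_disjoint[OF m, of k N] by blast
      then show "n \<in> B N" using \<open>n \<in> B k\<close> by simp
    qed (use B A_def in blast)
    then have "(\<Sum>i = m N..<m (Suc N). if i \<in> A then x i else 0) = sum x (B N)"
      using sum.inter_restrict[of "{m N..<m (Suc N)}" x A] by simp
    then show False using N[of "m (Suc N)"] big[of N] by simp
  qed
  then show ?thesis by (rule that)
qed



lemma limit_eq_0_if_finite_sums_bounded:
  fixes y :: "nat \<Rightarrow> 'a::real_normed_vector"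
  assumes lim: "(y \<circ> \<sigma>) \<longlonglongrightarrow> y0" and "strict_mono \<sigma>"
    and bounded: "\<And>S. finite S \<Longrightarrow> norm (sum y S) \<le> M"
  shows "y0 = 0"
proof (rule ccontr)
  assume "y0 \<noteq> 0"
  then have c: "norm y0 > 0" by simp
  then obtain K where K: "\<And>k. K \<le> k \<Longrightarrow> norm (y (\<sigma> k) - y0) < norm y0 / 2"
    using lim unfolding LIMSEQ_def dist_norm by (metis comp_apply half_gt_zero)
  obtain r :: nat where r: "2 * M / norm y0 < r" using reals_Archimedean2 by blast
  \<comment> \<open>\<open>r\<close> distinct terms close to \<open>y0\<close> add up to roughly \<open>r \<cdot> y0\<close>, which is too long.\<close>
  have "norm (\<Sum>k = K..<K + r. y (\<sigma> k) - y0) \<le> card {K..<K + r} * (norm y0 / 2)"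
    using K by (intro sum_norm_bound order.strict_implies_order) auto
  then have close: "norm (\<Sum>k = K..<K + r. y (\<sigma> k) - y0) \<le> r * (norm y0 / 2)" by simp
  have "(\<Sum>k = K..<K + r. y (\<sigma> k)) = sum y (\<sigma> ` {K..<K + r})"
    using strict_mono_imp_inj_on[OF assms(2)] by (simp add: sum.reindex inj_on_subset)
  then have far: "norm (\<Sum>k = K..<K + r. y (\<sigma> k)) \<le> M" using bounded by simp
  have "r * norm y0 = norm ((\<Sum>k = K..<K + r. y (\<sigma> k)) - (\<Sum>k = K..<K + r. y (\<sigma> k) - y0))"
    by (simp add: sum_subtractf sum_constant_scaleR)
  also have "\<dots> \<le> M + r * (norm y0 / 2)"
    using norm_triangle_ineq4 far close by (rule order_trans[OF _ add_mono])
  finally have "r * norm y0 \<le> M + r * (norm y0 / 2)" .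
  moreover have "2 * M < r * norm y0" using r c by (simp add: divide_less_eq mult.commute)
  ultimately show False by simp
qed

lemma unconditionally_Cauchy_if_finite_sums_in_compact:
  fixes x :: "nat \<Rightarrow> 'a::real_normed_vector"
  assumes "compact K" and sums_in: "\<And>F. finite F \<Longrightarrow> sum x F \<in> K"
  shows "unconditionally_Cauchy x"
proof (rule ccontr)
  assume "\<not> unconditionally_Cauchy x"
  then obtain d m B where d: "d > 0" and m: "strict_mono m"
    and B: "\<And>k. B k \<subseteq> {m k..<m (Suc k)}" and big: "\<And>k. norm (sum x (B k)) \<ge> d"
    by (rule not_unconditionally_Cauchy_blocks) blast
  define y where "y k = sum x (B k)" for k
  have block_sums_in: "sum y S \<in> K" if "finite S" for S
  proof -
    have "finite (B k)" for k by (rule finite_subset[OF B]) simp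
    moreover have "B j \<inter> B k = {}" if "j \<noteq> k" for j k
      using B[of j] B[of k] strict_mono_blocks_disjoint[OF m that] by blast
    ultimately have "sum y S = sum x (\<Union>(B ` S))"
      unfolding y_def using \<open>finite S\<close> by (intro sum.UNION_disjoint[symmetric]) auto
    then show ?thesis using sums_in \<open>finite S\<close> \<open>\<And>k. finite (B k)\<close> by simp
  qed
  obtain M where M: "\<And>z. z \<in> K \<Longrightarrow> norm z \<le> M"
    using compact_imp_bounded[OF assms(1)] unfolding bounded_iff by blast
  obtain y0 \<sigma> where \<sigma>: "strict_mono \<sigma>" and lim: "(y \<circ> \<sigma>) \<longlonglongrightarrow> y0"
  proof -
    have "y k \<in> K" for k using block_sums_in[of "{k}"] by simp
    then show ?thesis
      using that seq_compactE[OF compact_imp_seq_compact[OF assms(1)]] by blast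
  qed
  have "y0 = 0"
    using M block_sums_in by (intro limit_eq_0_if_finite_sums_bounded[OF lim \<sigma>]) blast
  with LIMSEQ_D[OF lim d] obtain k where "norm (y (\<sigma> k)) < d" by auto
  then show False using big by (simp add: y_def not_le[symmetric])
qed

lemma coef_eqI:
  assumes "schauder_basis e" and "(\<lambda>k. a k *\<^sub>R e k) sums y"
  shows "coef e n y = a n"
proof -
  have "\<exists>!c. (\<lambda>k. c k *\<^sub>R e k) sums y" using assms(1) unfolding schauder_basis_def by blast
  from this assms(2) have "(THE c. (\<lambda>k. c k *\<^sub>R e k) sums y) = a"
    by (rule the1_equality[where P = "\<lambda>c. (\<lambda>k. c k *\<^sub>R e k) sums y"])
  then show ?thesis unfolding coef_def by simp
qed

lemma sums_coef:
  assumes "schauder_basis e"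
  shows "(\<lambda>k. coef e k y *\<^sub>R e k) sums y"
proof -
  have "\<exists>!c. (\<lambda>k. c k *\<^sub>R e k) sums y" using assms unfolding schauder_basis_def by blast
  from theI'[OF this] show ?thesis unfolding coef_def .
qed

lemma coef_sum:
  assumes "schauder_basis e" and "finite F"
  shows "coef e n (\<Sum>k\<in>F. a k *\<^sub>R e k) = (if n \<in> F then a n else 0)"
proof (rule coef_eqI[OF assms(1)])
  have "(\<Sum>k\<in>F. a k *\<^sub>R e k) = (\<Sum>k\<in>F. (if k \<in> F then a k else 0) *\<^sub>R e k)"
    by (rule sum.cong) auto
  moreover have "(\<lambda>k. (if k \<in> F then a k else 0) *\<^sub>R e k) sums (\<Sum>k\<in>F. (if k \<in> F then a k else 0) *\<^sub>R e k)"
    using assms(2) by (rule sums_finite) simp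
  ultimately show "(\<lambda>k. (if k \<in> F then a k else 0) *\<^sub>R e k) sums (\<Sum>k\<in>F. a k *\<^sub>R e k)"
    by simp
qed

lemma sum_in_brick:
  assumes "schauder_basis e" and "\<And>n. eps n \<ge> 0" and "finite F"
  shows "(\<Sum>n\<in>F. eps n *\<^sub>R e n) \<in> brick e eps"
  using assms by (simp add: brick_def coef_sum)

lemma abs_le_imp_divide_in_unit_interval:
  fixes a b :: real
  assumes "\<bar>a\<bar> \<le> b"
  shows "\<bar>a / b\<bar> \<le> 1" and "a / b * b = a"
  using assms by (auto simp: abs_le_iff divide_le_eq_1 le_divide_eq_1 abs_div_pos)

lemma brick_eq_image_unit_cube:
  fixes e :: "nat \<Rightarrow> 'a::banach"
  assumes basis: "schauder_basis e" and "\<And>n. eps n \<ge> 0"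
    and uc: "unconditionally_Cauchy (\<lambda>n. eps n *\<^sub>R e n)"
  shows "brick e eps = (\<lambda>t. \<Sum>n. t n *\<^sub>R (eps n *\<^sub>R e n)) ` unit_cube"
proof (intro equalityI subsetI)
  fix y assume "y \<in> brick e eps"
  then have bounded: "\<bar>coef e n y\<bar> \<le> eps n" for n by (simp add: brick_def)
  define t where "t n = coef e n y / eps n" for n
  have "t \<in> unit_cube"
    using abs_le_imp_divide_in_unit_interval(1)[OF bounded] by (simp add: unit_cube_def t_def)
  moreover have "(\<lambda>n. t n *\<^sub>R (eps n *\<^sub>R e n)) = (\<lambda>n. coef e n y *\<^sub>R e n)"
    using abs_le_imp_divide_in_unit_interval(2)[OF bounded] by (simp add: t_def)
  then have "y = (\<Sum>n. t n *\<^sub>R (eps n *\<^sub>R e n))"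
    using sums_coef[OF basis] by (simp add: sums_iff)
  ultimately show "y \<in> (\<lambda>t. \<Sum>n. t n *\<^sub>R (eps n *\<^sub>R e n)) ` unit_cube" by blast
next
  fix z assume "z \<in> (\<lambda>t. \<Sum>n. t n *\<^sub>R (eps n *\<^sub>R e n)) ` unit_cube"
  then obtain t where t: "t \<in> unit_cube" and z: "z = (\<Sum>n. t n *\<^sub>R (eps n *\<^sub>R e n))" by blast
  then have "(\<lambda>n. t n *\<^sub>R (eps n *\<^sub>R e n)) sums z"
    using unconditionally_Cauchy_summable_multiplier[OF uc t] by (simp add: summable_sums)
  then have "coef e n z = t n * eps n" for n by (intro coef_eqI[OF basis]) simp
  moreover have "\<bar>t n * eps n\<bar> \<le> eps n" for n
    using t assms(2)[of n] by (simp add: unit_cube_def abs_mult mult_left_le_one_le)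
  ultimately show "z \<in> brick e eps" by (simp add: brick_def)
qed

lemma compact_brick_iff_unconditionally_Cauchy:
  fixes e :: "nat \<Rightarrow> 'a::banach"
  assumes "schauder_basis e" and "\<And>n. eps n \<ge> 0"
  shows "compact (brick e eps) \<longleftrightarrow> unconditionally_Cauchy (\<lambda>n. eps n *\<^sub>R e n)"
proof
  assume "compact (brick e eps)"
  then show "unconditionally_Cauchy (\<lambda>n. eps n *\<^sub>R e n)"
    using sum_in_brick[OF assms] by (rule unconditionally_Cauchy_if_finite_sums_in_compact)
next
  assume uc: "unconditionally_Cauchy (\<lambda>n. eps n *\<^sub>R e n)"
  show "compact (brick e eps)"
    unfolding brick_eq_image_unit_cube[OF assms uc]
    by (rule unconditionally_Cauchy_compact_multiplier_image[OF uc])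
qed

lemma holistic_brick_iff_unconditionally_Cauchy:
  fixes e :: "nat \<Rightarrow> 'a::banach"
  assumes "\<And>n. eps n \<ge> 0"
  shows "holistic_brick e eps \<longleftrightarrow> unconditionally_Cauchy (\<lambda>n. eps n *\<^sub>R e n)"
proof
  assume holistic: "holistic_brick e eps"
  show "unconditionally_Cauchy (\<lambda>n. eps n *\<^sub>R e n)"
  proof (rule ccontr)
    assume "\<not> unconditionally_Cauchy (\<lambda>n. eps n *\<^sub>R e n)"
    then obtain A where A: "\<not> summable (\<lambda>n. if n \<in> A then eps n *\<^sub>R e n else 0)"
      by (rule not_unconditionally_Cauchy_imp_divergent_subseries)
    have "summable (\<lambda>n. (if n \<in> A then eps n else 0) *\<^sub>R e n)"
      using holistic assms unfolding holistic_brick_def by simp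
    moreover have "(\<lambda>n. (if n \<in> A then eps n else 0) *\<^sub>R e n)
        = (\<lambda>n. if n \<in> A then eps n *\<^sub>R e n else 0)" by auto
    ultimately show False using A by simp
  qed
next
  assume uc: "unconditionally_Cauchy (\<lambda>n. eps n *\<^sub>R e n)"
  show "holistic_brick e eps"
    unfolding holistic_brick_def
  proof (intro allI impI)
    fix a :: "nat \<Rightarrow> real" assume bounded: "\<forall>n. \<bar>a n\<bar> \<le> eps n"
    then have "(\<lambda>n. a n / eps n) \<in> unit_cube"
      unfolding unit_cube_def using abs_le_imp_divide_in_unit_interval(1) by blast
    then have "summable (\<lambda>n. (a n / eps n) *\<^sub>R (eps n *\<^sub>R e n))"
      by (rule unconditionally_Cauchy_summable_multiplier[OF uc])
    moreover have "(a n / eps n) *\<^sub>R (eps n *\<^sub>R e n) = a n *\<^sub>R e n" for n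
      using abs_le_imp_divide_in_unit_interval(2) bounded by simp
    ultimately show "summable (\<lambda>n. a n *\<^sub>R e n)" by (simp only:)
  qed
qed

lemma r_unc_less_infinity_imp_summable:
  assumes "r_unc e eps < \<infinity>" and "\<forall>n. \<theta> n = 1 \<or> \<theta> n = -1"
  shows "summable (\<lambda>n. (\<theta> n * eps n) *\<^sub>R e n)"
proof (rule ccontr)
  assume "\<not> summable (\<lambda>n. (\<theta> n * eps n) *\<^sub>R e n)"
  moreover have "(if summable (\<lambda>n. (\<theta> n * eps n) *\<^sub>R e n)
       then ereal (norm (\<Sum>n. (\<theta> n * eps n) *\<^sub>R e n)) else \<infinity>) \<le> r_unc e eps"
    unfolding r_unc_def by (rule SUP_upper) (use assms(2) in simp)
  ultimately show False using assms(1) by simp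
qed

lemma r_unc_less_infinity_iff_unconditionally_Cauchy:
  fixes e :: "nat \<Rightarrow> 'a::banach"
  assumes "\<And>n. eps n \<ge> 0"
  shows "r_unc e eps < \<infinity> \<longleftrightarrow> unconditionally_Cauchy (\<lambda>n. eps n *\<^sub>R e n)"
proof
  assume r_unc: "r_unc e eps < \<infinity>"
  show "unconditionally_Cauchy (\<lambda>n. eps n *\<^sub>R e n)"
  proof (rule ccontr)
    assume "\<not> unconditionally_Cauchy (\<lambda>n. eps n *\<^sub>R e n)"
    then obtain A where A: "\<not> summable (\<lambda>n. if n \<in> A then eps n *\<^sub>R e n else 0)"
      by (rule not_unconditionally_Cauchy_imp_divergent_subseries)
    define \<theta> where "\<theta> n = (if n \<in> A then 1 else -1 :: real)" for n
    have "summable (\<lambda>n. (1 * eps n) *\<^sub>R e n)"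
      by (rule r_unc_less_infinity_imp_summable[OF r_unc]) simp
    moreover have "summable (\<lambda>n. (\<theta> n * eps n) *\<^sub>R e n)"
      by (rule r_unc_less_infinity_imp_summable[OF r_unc]) (simp add: \<theta>_def)
    ultimately have "summable (\<lambda>n. (1 / 2 :: real) *\<^sub>R ((1 * eps n) *\<^sub>R e n + (\<theta> n * eps n) *\<^sub>R e n))"
      by (intro summable_scaleR_right summable_add)
    moreover have "(\<lambda>n. (1 / 2 :: real) *\<^sub>R ((1 * eps n) *\<^sub>R e n + (\<theta> n * eps n) *\<^sub>R e n))
        = (\<lambda>n. if n \<in> A then eps n *\<^sub>R e n else 0)"
      by (auto simp: \<theta>_def)
    ultimately show False using A by simp
  qed
next
  assume uc: "unconditionally_Cauchy (\<lambda>n. eps n *\<^sub>R e n)"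
  obtain M where "\<forall>y \<in> (\<lambda>t. \<Sum>n. t n *\<^sub>R (eps n *\<^sub>R e n)) ` unit_cube. norm y \<le> M"
    using compact_imp_bounded[OF unconditionally_Cauchy_compact_multiplier_image[OF uc]]
    unfolding bounded_iff by blast
  then have M: "\<And>t. t \<in> unit_cube \<Longrightarrow> norm (\<Sum>n. t n *\<^sub>R (eps n *\<^sub>R e n)) \<le> M"
    by blast
  note summable = unconditionally_Cauchy_summable_multiplier[OF uc]
  have "r_unc e eps \<le> ereal M"
    unfolding r_unc_def
  proof (rule SUP_least)
    fix \<theta> :: "nat \<Rightarrow> real" assume "\<theta> \<in> {\<theta>. \<forall>n. \<theta> n = 1 \<or> \<theta> n = -1}"
    then have "\<theta> n = 1 \<or> \<theta> n = -1" for n by blast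
    then have "\<bar>\<theta> n\<bar> = 1" for n by (metis abs_1 abs_minus_cancel)
    then have \<theta>: "\<theta> \<in> unit_cube" by (simp add: unit_cube_def)
    show "(if summable (\<lambda>n. (\<theta> n * eps n) *\<^sub>R e n)
       then ereal (norm (\<Sum>n. (\<theta> n * eps n) *\<^sub>R e n)) else \<infinity>) \<le> ereal M"
      using M[OF \<theta>] summable[OF \<theta>] by simp
  qed
  then show "r_unc e eps < \<infinity>" using le_less_trans[of _ "ereal M" \<infinity>] by simp
qed

theorem theorem3p7:
  fixes e :: "nat \<Rightarrow> 'a::banach" and eps :: "nat \<Rightarrow> real"
  assumes "schauder_basis e"
    and "\<And>n. norm (e n) = 1"
    and "\<And>n. eps n \<ge> 0"
  shows "(compact (brick e eps) \<longleftrightarrow> holistic_brick e eps)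
       \<and> (holistic_brick e eps \<longleftrightarrow> unconditionally_convergent (\<lambda>n. eps n *\<^sub>R e n))
       \<and> (unconditionally_convergent (\<lambda>n. eps n *\<^sub>R e n) \<longleftrightarrow> r_unc e eps < \<infinity>)"
proof -
  have "unconditionally_convergent (\<lambda>n. eps n *\<^sub>R e n)
      \<longleftrightarrow> unconditionally_Cauchy (\<lambda>n. eps n *\<^sub>R e n)"
    by (rule unconditionally_convergent_iff_unconditionally_Cauchy)
  moreover have "compact (brick e eps) \<longleftrightarrow> unconditionally_Cauchy (\<lambda>n. eps n *\<^sub>R e n)"
    using assms(1,3) by (rule compact_brick_iff_unconditionally_Cauchy)
  moreover have "holistic_brick e eps \<longleftrightarrow> unconditionally_Cauchy (\<lambda>n. eps n *\<^sub>R e n)"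
    using assms(3) by (rule holistic_brick_iff_unconditionally_Cauchy)
  moreover have "r_unc e eps < \<infinity> \<longleftrightarrow> unconditionally_Cauchy (\<lambda>n. eps n *\<^sub>R e n)"
    using assms(3) by (rule r_unc_less_infinity_iff_unconditionally_Cauchy)
  ultimately show ?thesis by blast
qed

end
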